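(* Let $n\ge2$ and $0\le m\le\lfloor n/2\rfloor$. For $z^n\in\mathcal Z^n$ let $\hat{\mathbf S}(z^n)=(\hat s_1,\dots,\hat s_n)$ be any minimizer of $\tilde L_{\mathbf S}(z^n)$ over $\mathbf S\in\mathcal S^n_{0,m}$, and let the $(0,m)$-S-DUDE be the denoiser with output $\hat X_t(z^n)=\hat s_t(z_t)$, $1\le t\le n$. Then for all $\epsilon>0$ and all $x^n\in\mathcal X^n$, $$\Pr\Big(L_{\hat{\mathbf S}(Z^n)}(x^n,Z^n)-D_{0,m}(x^n,Z^n)>\epsilon\Big)\le 2\exp\left(-n\Big[\frac{\epsilon^2}{2L_{\max}^2}-2\Big\{h\Big(\frac mn\Big)+\frac{(m+1)\ln N}{n}\Big\}\Big]\right),$$ where $h(x)=-x\ln x-(1-x)\ln(1-x)$ and $N=|\mathcal S|$. In particular the right-hand side is exponentially small in $n$ provided $m=o(n)$.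
   Context: Let $\mathcal X,\mathcal Z,\hat{\mathcal X}$ be finite alphabets and $\Pi=\{\Pi(x,z)\}$ a $|\mathcal X|\times|\mathcal Z|$ stochastic matrix (discrete memoryless channel) of full row rank. For deterministic $x^n\in\mathcal X^n$, the channel output $Z^n$ has independent components with $\Pr(Z_t=z)=\Pi(x_t,z)$. Fix a loss $\Lambda:\mathcal X\times\hat{\mathcal X}\to[0,\infty)$, $\Lambda_{\max}=\max_{x,\hat x}\Lambda(x,\hat x)$. Let $\mathcal S$ be the set of all maps $s:\mathcal Z\to\hat{\mathcal X}$. Fix a real $|\mathcal Z|\times|\mathcal X|$ matrix $H$ with $\Pi H=I$; $h(z)\in\mathbb R^{\mathcal X}$ is the column vector equal to the $z$-th row of $H$. For $s\in\mathcal S$, $\rho(s)\in\mathbb R^{\mathcal X}$ has components $\rho_x(s)=\sum_z\Lambda(x,s(z))\Pi(x,z)$, and $\ell(z,s)=h(z)^T\rho(s)$. Let $\ell_{\max}=\max_{z,s}\ell(z,s)-\min_{z,s}\ell(z,s)$, $L_{\max}=\Lambda_{\max}+\ell_{\max}$. For $\mathbf S=(s_1,\dots,s_n)\in\mathcal S^n$: $L_{\mathbf S}(x^n,z^n)=\frac1n\sum_{t=1}^n\Lambda(x_t,s_t(z_t))$ and $\tilde L_{\mathbf S}(z^n)=\frac1n\sum_{t=1}^n\ell(z_t,s_t)$. Let $\mathcal S^n_{0,m}=\{\mathbf S\in\mathcal S^n:\sum_{t=2}^n\mathbf 1_{\{s_{t-1}\ne s_t\}}\le m\}$ and $D_{0,m}(x^n,z^n)=\min_{\mathbf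 S\in\mathcal S^n_{0,m}}L_{\mathbf S}(x^n,z^n)$. *)

theory Defs
  imports "HOL-Analysis.Analysis"
begin

(* Sequences x^n, z^n are lists of length n; position t (0-based) corresponds to time t+1.
   Channel Ch x z, loss Lam x xh, matrix H z x with Ch H = I. *)

definition rho :: "('x::finite \<Rightarrow> 'z::finite \<Rightarrow> real) \<Rightarrow> ('x \<Rightarrow> 'xh \<Rightarrow> real) \<Rightarrow> ('z \<Rightarrow> 'xh) \<Rightarrow> 'x \<Rightarrow> real"
  where "rho Ch Lam s x = (\<Sum>z\<in>UNIV. Lam x (s z) * Ch x z)"

definition ell :: "('x::finite \<Rightarrow> 'z::finite \<Rightarrow> real) \<Rightarrow> ('x \<Rightarrow> 'xh \<Rightarrow> real) \<Rightarrow> ('z \<Rightarrow> 'x \<Rightarrow> real)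
    \<Rightarrow> 'z \<Rightarrow> ('z \<Rightarrow> 'xh) \<Rightarrow> real"
  where "ell Ch Lam H z s = (\<Sum>x\<in>UNIV. H z x * rho Ch Lam s x)"

definition Lambda_max :: "('x::finite \<Rightarrow> 'xh::finite \<Rightarrow> real) \<Rightarrow> real"
  where "Lambda_max Lam = Max (range (\<lambda>(x, xh). Lam x xh))"

definition ell_max :: "('x::finite \<Rightarrow> 'z::finite \<Rightarrow> real) \<Rightarrow> ('x \<Rightarrow> 'xh::finite \<Rightarrow> real) \<Rightarrow> ('z \<Rightarrow> 'x \<Rightarrow> real) \<Rightarrow> real"
  where "ell_max Ch Lam H = Max (range (\<lambda>(z, s). ell Ch Lam H z s)) - Min (range (\<lambda>(z, s). ell Ch Lam H z s))"

definition L_max :: "('x::finite \<Rightarrow> 'z::finite \<Rightarrow> real) \<Rightarrow> ('x \<Rightarrow> 'xh::finite \<Rightarrow> real) \<Rightarrow> ('z \<Rightarrow> 'x \<Rightarrow> real) \<Rightarrow> real"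
  where "L_max Ch Lam H = Lambda_max Lam + ell_max Ch Lam H"

definition loss_S :: "('x \<Rightarrow> 'xh \<Rightarrow> real) \<Rightarrow> ('z \<Rightarrow> 'xh) list \<Rightarrow> 'x list \<Rightarrow> 'z list \<Rightarrow> real"
  where "loss_S Lam S xs zs = (1 / real (length xs)) * (\<Sum>t<length xs. Lam (xs ! t) ((S ! t) (zs ! t)))"

definition est_loss_S :: "('x::finite \<Rightarrow> 'z::finite \<Rightarrow> real) \<Rightarrow> ('x \<Rightarrow> 'xh \<Rightarrow> real) \<Rightarrow> ('z \<Rightarrow> 'x \<Rightarrow> real)
    \<Rightarrow> ('z \<Rightarrow> 'xh) list \<Rightarrow> 'z list \<Rightarrow> real"
  where "est_loss_S Ch Lam H S zs = (1 / real (length zs)) * (\<Sum>t<length zs. ell Ch Lam H (zs ! t) (S ! t))"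

definition switches :: "'a list \<Rightarrow> nat"
  where "switches S = card {t. 1 \<le> t \<and> t < length S \<and> S ! (t - 1) \<noteq> S ! t}"

definition S0m :: "nat \<Rightarrow> nat \<Rightarrow> ('z \<Rightarrow> 'xh) list set"
  where "S0m n m = {S. length S = n \<and> switches S \<le> m}"

definition D0m :: "('x \<Rightarrow> 'xh::finite \<Rightarrow> real) \<Rightarrow> nat \<Rightarrow> 'x list \<Rightarrow> 'z::finite list \<Rightarrow> real"
  where "D0m Lam m xs zs = Min ((\<lambda>S. loss_S Lam S xs zs) ` (S0m (length xs) m :: ('z \<Rightarrow> 'xh) list set))"

(* Probability, under the memoryless channel with deterministic input xs, that Z^n satisfies P *)
definition chan_prob :: "('x \<Rightarrow> 'z::finite \<Rightarrow> real) \<Rightarrow> 'x list \<Rightarrow> ('z list \<Rightarrow> bool) \<Rightarrow> real"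
  where "chan_prob Ch xs P =
     (\<Sum>zs\<in>{zs. length zs = length xs \<and> P zs}. \<Prod>t<length xs. Ch (xs ! t) (zs ! t))"

definition hb :: "real \<Rightarrow> real"
  where "hb x = - x * ln x - (1 - x) * ln (1 - x)"

end

theory Submission
  imports Defs "HOL-Probability.Hoeffding"
begin

(* For a fixed sequence S the estimated loss is an unbiased estimate of the true loss: Pi H = I
   makes ell(Z_t, s_t) have mean rho_{x_t}(s_t). The summands are independent and range over an
   interval of length L_max, so by Hoeffding's inequality the two losses differ by more than eps/2
   with probability at most 2 exp(-n eps^2 / (2 L_max^2)). If the S-DUDE loses more than eps against
   the best sequence in S_{0,m}, one of these two sequences has such a deviation, and a union bound
   over S_{0,m} finishes the proof. A sequence with at most m switches is determined by its switch
   positions and by its values at time 1 and at the switches, so there are at most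
   N^(m+1) * sum_{k<=m} (n choose k) <= N^(m+1) exp (n h(m/n)) of them. *)

subsection \<open>Counting sequences with few switches\<close>

lemma sum_binomial_le_exp_entropy:
  fixes n m :: nat
  assumes n: "n \<ge> 1" and m: "2 * m \<le> n"
  shows "(\<Sum>k\<le>m. real (n choose k)) \<le> exp (real n * hb (real m / real n))"
proof (cases "m = 0")
  case True
  thus ?thesis by (simp add: hb_def)
next
  case False
  define p where "p = real m / real n"
  have p0: "p > 0" and p_half: "p \<le> 1 - p"
    using False n m by (simp_all add: p_def field_simps)
  have mono: "p ^ m * (1 - p) ^ (n - m) \<le> p ^ k * (1 - p) ^ (n - k)" if "k \<le> m" for k
  proof -
    have "p ^ m * (1 - p) ^ (n - m) = p ^ k * p ^ (m - k) * (1 - p) ^ (n - m)"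
      using that by (simp flip: power_add)
    also have "\<dots> \<le> p ^ k * (1 - p) ^ (m - k) * (1 - p) ^ (n - m)"
      using p0 p_half by (intro mult_right_mono mult_left_mono power_mono) auto
    also have "\<dots> = p ^ k * (1 - p) ^ (n - k)"
      using that m by (simp add: mult.assoc flip: power_add)
    finally show ?thesis .
  qed
  have "(\<Sum>k\<le>m. real (n choose k)) * (p ^ m * (1 - p) ^ (n - m))
      \<le> (\<Sum>k\<le>m. real (n choose k) * p ^ k * (1 - p) ^ (n - k))"
    unfolding sum_distrib_right using mono by (intro sum_mono) (simp add: mult.assoc mult_left_mono)
  also have "\<dots> \<le> (\<Sum>k\<le>n. real (n choose k) * p ^ k * (1 - p) ^ (n - k))"
    using m p0 p_half by (intro sum_mono2) auto
  also have "\<dots> = 1"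
    by (simp flip: binomial_ring)
  finally have bound: "(\<Sum>k\<le>m. real (n choose k)) * (p ^ m * (1 - p) ^ (n - m)) \<le> 1" .
  have "p ^ m * (1 - p) ^ (n - m) = exp (real m * ln p + real (n - m) * ln (1 - p))"
    using p0 p_half by (simp add: exp_add exp_of_nat_mult)
  also have "real m * ln p + real (n - m) * ln (1 - p) = - (real n * hb p)"
    using n m by (simp add: hb_def p_def of_nat_diff field_simps)
  finally have "(\<Sum>k\<le>m. real (n choose k)) * exp (- (real n * hb p)) \<le> 1"
    using bound by simp
  thus ?thesis
    by (simp add: p_def exp_minus field_simps)
qed

definition switch_set :: "'a list \<Rightarrow> nat set"
  where "switch_set S = {t. 1 \<le> t \<and> t < length S \<and> S ! (t - 1) \<noteq> S ! t}"

lemma switches_eq_card_switch_set: "switches S = card (switch_set S)"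
  by (simp add: switches_def switch_set_def)

lemma switch_set_subset: "switch_set S \<subseteq> {..<length S}"
  by (auto simp: switch_set_def)

lemma nth_Suc_eq_if_notin_switch_set:
  "Suc i < length S \<Longrightarrow> Suc i \<notin> switch_set S \<Longrightarrow> S ! Suc i = S ! i"
  by (simp add: switch_set_def)

lemma list_eq_if_agree_on_switch_set:
  assumes len: "length S = length S'" and sw: "switch_set S = switch_set S'"
    and agree: "\<And>i. i \<in> insert 0 (switch_set S) \<Longrightarrow> S ! i = S' ! i"
  shows "S = S'"
proof (rule nth_equalityI)
  show "S ! i = S' ! i" if "i < length S" for i
    using that
  proof (induction i)
    case 0
    thus ?case using agree by simp
  next
    case (Suc i)
    show ?case
    proof (cases "Suc i \<in> switch_set S")
      case True
      thus ?thesis using agree by simp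
    next
      case False
      hence "S ! Suc i = S ! i" "S' ! Suc i = S' ! i"
        using Suc.prems len sw by (simp_all add: nth_Suc_eq_if_notin_switch_set)
      thus ?thesis using Suc by simp
    qed
  qed
qed (fact len)

definition switch_code :: "'a list \<Rightarrow> nat set \<times> (nat \<Rightarrow> 'a)"
  where "switch_code S = (switch_set S, restrict (nth S) (insert 0 (switch_set S)))"

lemma inj_on_switch_code: "inj_on switch_code {S. length S = n}"
proof (rule inj_onI)
  fix S S' assume "S \<in> {S. length S = n}" "S' \<in> {S. length S = n}"
    and eq: "switch_code S = switch_code S'"
  hence "length S = length S'" by simp
  moreover have sw: "switch_set S = switch_set S'"
    using eq by (simp add: switch_code_def)
  moreover have "S ! i = S' ! i" if "i \<in> insert 0 (switch_set S)" for i
  proof -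
    have "restrict (nth S) (insert 0 (switch_set S)) = restrict (nth S') (insert 0 (switch_set S))"
      using eq sw by (simp add: switch_code_def)
    from fun_cong[OF this, of i] show ?thesis
      using that by simp
  qed
  ultimately show "S = S'" by (rule list_eq_if_agree_on_switch_set)
qed

lemma card_subsets_card_le:
  "card {T. T \<subseteq> {..<n} \<and> card T \<le> m} \<le> (\<Sum>k\<le>m. n choose k)"
proof -
  have "{T. T \<subseteq> {..<n} \<and> card T \<le> m} = (\<Union>k\<le>m. {T. T \<subseteq> {..<n} \<and> card T = k})"
    by auto
  hence "card {T. T \<subseteq> {..<n} \<and> card T \<le> m} \<le> (\<Sum>k\<le>m. card {T. T \<subseteq> {..<n} \<and> card T = k})"
    using card_UN_le[of "{..m}"] by simp
  thus ?thesis by (simp add: n_subsets)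
qed

lemma card_S0m_le:
  "card (S0m n m :: ('a::finite \<Rightarrow> 'b::finite) list set)
     \<le> CARD('a \<Rightarrow> 'b) ^ (m + 1) * (\<Sum>k\<le>m. n choose k)"
proof -
  define TT where "TT = {T. T \<subseteq> {..<n} \<and> card T \<le> m}"
  define codes where "codes = Sigma TT (\<lambda>T. PiE (insert 0 T) (\<lambda>_. UNIV :: ('a \<Rightarrow> 'b) set))"
  have fin_T: "finite T" if "T \<in> TT" for T
    using that by (auto simp: TT_def intro: finite_subset)
  have fin_TT: "finite TT"
    unfolding TT_def by (rule finite_subset[of _ "Pow {..<n}"]) auto
  have "inj_on switch_code (S0m n m :: ('a \<Rightarrow> 'b) list set)"
    by (rule inj_on_subset[OF inj_on_switch_code[of n]]) (auto simp: S0m_def)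
  moreover have "switch_code ` (S0m n m :: ('a \<Rightarrow> 'b) list set) \<subseteq> codes"
  proof
    fix c assume "c \<in> switch_code ` (S0m n m :: ('a \<Rightarrow> 'b) list set)"
    then obtain S where S: "S \<in> S0m n m" and c: "c = switch_code S" by blast
    have "switch_set S \<in> TT"
      using S switch_set_subset[of S] by (simp add: TT_def S0m_def switches_eq_card_switch_set)
    thus "c \<in> codes" by (simp add: c switch_code_def codes_def)
  qed
  moreover have "finite codes"
    unfolding codes_def using fin_TT fin_T by (intro finite_SigmaI finite_PiE) auto
  ultimately have "card (S0m n m :: ('a \<Rightarrow> 'b) list set) \<le> card codes"
    by (rule card_inj_on_le)
  also have "card codes = (\<Sum>T\<in>TT. card (PiE (insert 0 T) (\<lambda>_. UNIV :: ('a \<Rightarrow> 'b) set)))"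
    unfolding codes_def using fin_TT fin_T by (intro card_SigmaI) (auto intro!: finite_PiE)
  also have "\<dots> = (\<Sum>T\<in>TT. CARD('a \<Rightarrow> 'b) ^ card (insert 0 T))"
    using fin_T by (intro sum.cong refl) (simp only: card_PiE finite_insert prod_constant)
  also have "\<dots> \<le> (\<Sum>T\<in>TT. CARD('a \<Rightarrow> 'b) ^ (m + 1))"
  proof (intro sum_mono power_increasing)
    fix T assume "T \<in> TT"
    thus "card (insert 0 T) \<le> m + 1"
      by (intro card_insert_le_m1) (auto simp: TT_def)
  qed (simp add: Suc_le_eq)
  also have "\<dots> = card TT * CARD('a \<Rightarrow> 'b) ^ (m + 1)"
    by (simp only: sum_constant of_nat_id)
  also have "\<dots> \<le> CARD('a \<Rightarrow> 'b) ^ (m + 1) * (\<Sum>k\<le>m. n choose k)"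
    using card_subsets_card_le[of n m] unfolding TT_def by (metis mult.commute mult_le_mono1)
  finally show ?thesis .
qed

lemma finite_S0m: "finite (S0m n m :: ('a::finite \<Rightarrow> 'b::finite) list set)"
  by (rule finite_subset[OF _ finite_lists_length_eq[of UNIV n]]) (auto simp: S0m_def)

lemma replicate_in_S0m: "replicate n s \<in> S0m n m"
proof -
  have "switch_set (replicate n s) = {}"
    by (auto simp: switch_set_def)
  thus ?thesis by (simp add: S0m_def switches_eq_card_switch_set)
qed

lemma card_S0m_pos: "card (S0m n m :: ('a::finite \<Rightarrow> 'b::finite) list set) > 0"
  unfolding card_gt_0_iff using finite_S0m replicate_in_S0m by blast

lemma card_S0m_le_exp_entropy:
  assumes "n \<ge> 1" and "2 * m \<le> n"
  shows "real (card (S0m n m :: ('a::finite \<Rightarrow> 'b::finite) list set))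
     \<le> real CARD('a \<Rightarrow> 'b) ^ (m + 1) * exp (real n * hb (real m / real n))"
proof -
  have "real (card (S0m n m :: ('a \<Rightarrow> 'b) list set))
      \<le> real (CARD('a \<Rightarrow> 'b) ^ (m + 1) * (\<Sum>k\<le>m. n choose k))"
    by (simp only: of_nat_le_iff card_S0m_le)
  also have "\<dots> = real CARD('a \<Rightarrow> 'b) ^ (m + 1) * (\<Sum>k\<le>m. real (n choose k))"
    by simp
  also have "\<dots> \<le> real CARD('a \<Rightarrow> 'b) ^ (m + 1) * exp (real n * hb (real m / real n))"
    using sum_binomial_le_exp_entropy[OF assms] by (intro mult_left_mono) auto
  finally show ?thesis .
qed

lemma D0m_attained:
  fixes Lam :: "'x \<Rightarrow> 'xh::finite \<Rightarrow> real" and zs :: "'z::finite list"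
  shows "\<exists>S \<in> S0m (length xs) m. D0m Lam m xs zs = loss_S Lam S xs zs"
proof -
  have "D0m Lam m xs zs \<in> (\<lambda>S. loss_S Lam S xs zs) ` (S0m (length xs) m :: ('z \<Rightarrow> 'xh) list set)"
    unfolding D0m_def by (intro Min_in finite_imageI finite_S0m) (use replicate_in_S0m in blast)
  thus ?thesis by auto
qed

subsection \<open>The channel output as a product distribution\<close>

locale memoryless_channel =
  fixes Ch :: "'x::finite \<Rightarrow> 'z::finite \<Rightarrow> real"
  assumes Ch_nonneg: "\<And>x z. Ch x z \<ge> 0"
    and Ch_sum: "\<And>x. (\<Sum>z\<in>UNIV. Ch x z) = 1"
begin

definition output_pmf :: "'x \<Rightarrow> 'z pmf"
  where "output_pmf x = embed_pmf (Ch x)"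

definition output_seq_pmf :: "'x list \<Rightarrow> (nat \<Rightarrow> 'z) pmf"
  where "output_seq_pmf xs = Pi_pmf {..<length xs} undefined (\<lambda>t. output_pmf (xs ! t))"

lemma pmf_output_pmf: "pmf (output_pmf x) z = Ch x z"
proof -
  have "(\<integral>\<^sup>+z. ennreal (Ch x z) \<partial>count_space UNIV) = 1"
    by (simp add: nn_integral_count_space_finite Ch_nonneg Ch_sum)
  thus ?thesis
    unfolding output_pmf_def by (subst pmf_embed_pmf) (auto simp: Ch_nonneg)
qed

lemma expectation_output_seq_component:
  assumes "t < length xs"
  shows "measure_pmf.expectation (output_seq_pmf xs) (\<lambda>f. g (f t) :: real)
       = (\<Sum>z\<in>UNIV. Ch (xs ! t) z * g z)"
proof -
  have "map_pmf (\<lambda>f. f t) (output_seq_pmf xs) = output_pmf (xs ! t)"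
    unfolding output_seq_pmf_def using assms by (simp add: Pi_pmf_component)
  hence "measure_pmf.expectation (output_seq_pmf xs) (\<lambda>f. g (f t))
       = measure_pmf.expectation (output_pmf (xs ! t)) g"
    by (metis integral_map_pmf)
  also have "\<dots> = (\<Sum>z\<in>UNIV. g z * pmf (output_pmf (xs ! t)) z)"
    by (rule integral_measure_pmf_real) auto
  finally show ?thesis
    by (simp add: pmf_output_pmf mult.commute)
qed

lemma chan_prob_eq_prob_output_seq:
  "chan_prob Ch xs Q = measure_pmf.prob (output_seq_pmf xs) {f. Q (map f [0..<length xs])}"
proof -
  define n where "n = length xs"
  define M where "M = output_seq_pmf xs"
  define lists where "lists = {zs :: 'z list. length zs = n}"
  define fun_of :: "'z list \<Rightarrow> nat \<Rightarrow> 'z"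
    where "fun_of zs = (\<lambda>i. if i < n then zs ! i else undefined)" for zs
  define A where "A = {f. Q (map f [0..<n])}"
  have fin: "finite lists"
    unfolding lists_def using finite_lists_length_eq[of "UNIV :: 'z set" n] by simp
  have map_fun_of: "map (fun_of zs) [0..<n] = zs" if "zs \<in> lists" for zs
    using that by (intro nth_equalityI) (auto simp: lists_def fun_of_def)
  hence inj: "inj_on fun_of lists"
    by (metis inj_onI)
  have "set_pmf M \<subseteq> fun_of ` lists"
  proof
    fix f assume "f \<in> set_pmf M"
    hence "f = fun_of (map f [0..<n])"
      using set_Pi_pmf_subset[of "{..<n}" undefined]
      by (auto simp: M_def output_seq_pmf_def n_def fun_of_def fun_eq_iff)
    thus "f \<in> fun_of ` lists" by (auto simp: lists_def)
  qed
  hence "measure_pmf.prob M A = measure_pmf.prob M (A \<inter> fun_of ` lists)"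
    by (metis inf.absorb_iff2 inf_assoc measure_Int_set_pmf)
  also have "A \<inter> fun_of ` lists = fun_of ` {zs \<in> lists. Q zs}"
    using map_fun_of by (auto simp: A_def)
  also have "measure_pmf.prob M \<dots> = sum (pmf M) (fun_of ` {zs \<in> lists. Q zs})"
    using fin by (intro measure_measure_pmf_finite) auto
  also have "\<dots> = (\<Sum>zs\<in>{zs \<in> lists. Q zs}. pmf M (fun_of zs))"
    by (simp add: sum.reindex inj_on_subset[OF inj])
  also have "\<dots> = (\<Sum>zs\<in>{zs \<in> lists. Q zs}. \<Prod>t<n. Ch (xs ! t) (zs ! t))"
    by (intro sum.cong refl)
       (auto simp: M_def output_seq_pmf_def n_def pmf_Pi fun_of_def pmf_output_pmf)
  finally show ?thesis
    by (simp add: chan_prob_def lists_def M_def A_def n_def)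
qed

lemma chan_prob_le_1: "chan_prob Ch xs Q \<le> 1"
  by (simp add: chan_prob_eq_prob_output_seq)

end

subsection \<open>Range and mean of the estimated loss\<close>

lemma Lam_le_Lambda_max: "Lam x xh \<le> Lambda_max Lam"
  unfolding Lambda_max_def by (rule Max_ge) auto

lemma ell_ge_Min:
  fixes Ch :: "'x::finite \<Rightarrow> 'z::finite \<Rightarrow> real" and Lam :: "'x \<Rightarrow> 'xh::finite \<Rightarrow> real"
  shows "Min (range (\<lambda>(z, s). ell Ch Lam H z s)) \<le> ell Ch Lam H z s"
  by (rule Min_le) auto

lemma ell_le_Max:
  fixes Ch :: "'x::finite \<Rightarrow> 'z::finite \<Rightarrow> real" and Lam :: "'x \<Rightarrow> 'xh::finite \<Rightarrow> real"
  shows "ell Ch Lam H z s \<le> Max (range (\<lambda>(z, s). ell Ch Lam H z s))"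
  by (rule Max_ge) auto

lemma L_max_nonneg:
  assumes "\<And>x xh. Lam x xh \<ge> 0"
  shows "L_max Ch Lam H \<ge> 0"
proof -
  have "0 \<le> Lambda_max Lam"
    using assms[of undefined undefined] Lam_le_Lambda_max order_trans by blast
  moreover have "0 \<le> ell_max Ch Lam H"
    using ell_ge_Min[of Ch Lam H undefined undefined] ell_le_Max[of Ch Lam H undefined undefined]
    by (simp add: ell_max_def)
  ultimately show ?thesis by (simp add: L_max_def)
qed

lemma sum_Ch_mult_ell:
  assumes right_inv: "\<And>x x'. (\<Sum>z\<in>UNIV. Ch x z * H z x') = (if x = x' then 1 else 0)"
  shows "(\<Sum>z\<in>UNIV. Ch x z * ell Ch Lam H z s) = rho Ch Lam s x"
proof -
  have "(\<Sum>z\<in>UNIV. Ch x z * ell Ch Lam H z s)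
      = (\<Sum>x'\<in>UNIV. (\<Sum>z\<in>UNIV. Ch x z * H z x') * rho Ch Lam s x')"
    unfolding ell_def sum_distrib_left sum_distrib_right
    by (subst sum.swap) (simp add: mult.assoc)
  also have "\<dots> = (\<Sum>x'\<in>UNIV. if x = x' then rho Ch Lam s x' else 0)"
    by (intro sum.cong) (simp_all add: right_inv)
  also have "\<dots> = rho Ch Lam s x"
    by simp
  finally show ?thesis .
qed

subsection \<open>Concentration and the union bound\<close>

context memoryless_channel
begin

lemma loss_estimate_deviation_prob_le:
  fixes Lam :: "'x \<Rightarrow> 'xh::finite \<Rightarrow> real" and H :: "'z \<Rightarrow> 'x \<Rightarrow> real"
    and S :: "('z \<Rightarrow> 'xh) list"
  assumes right_inv: "\<And>x x'. (\<Sum>z\<in>UNIV. Ch x z * H z x') = (if x = x' then 1 else 0)"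
    and loss_nonneg: "\<And>x xh. Lam x xh \<ge> 0"
    and len: "length S = length xs" "xs \<noteq> []"
    and L_pos: "L_max Ch Lam H > 0" and c: "c \<ge> 0"
  shows "measure_pmf.prob (output_seq_pmf xs)
      {f. c \<le> \<bar>loss_S Lam S xs (map f [0..<length xs]) - est_loss_S Ch Lam H S (map f [0..<length xs])\<bar>}
    \<le> 2 * exp (- 2 * real (length xs) * c\<^sup>2 / (L_max Ch Lam H)\<^sup>2)"
proof -
  define n where "n = length xs"
  define M where "M = output_seq_pmf xs"
  define lo where "lo = Min (range (\<lambda>(z, s). ell Ch Lam H z s))"
  define hi where "hi = Max (range (\<lambda>(z, s). ell Ch Lam H z s))"
  define Y where "Y t f = Lam (xs ! t) ((S ! t) (f t)) - ell Ch Lam H (f t) (S ! t)" for t f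
  have n_pos: "n > 0" using len by (simp add: n_def)
  have Y_range: "Y t f \<in> {- hi..Lambda_max Lam - lo}" for t f
  proof -
    have "0 \<le> Lam (xs ! t) ((S ! t) (f t))" "Lam (xs ! t) ((S ! t) (f t)) \<le> Lambda_max Lam"
      "lo \<le> ell Ch Lam H (f t) (S ! t)" "ell Ch Lam H (f t) (S ! t) \<le> hi"
      unfolding lo_def hi_def by (simp_all only: loss_nonneg Lam_le_Lambda_max ell_ge_Min ell_le_Max)
    thus ?thesis by (simp add: Y_def)
  qed
  have range_width: "(Lambda_max Lam - lo) - (- hi) = L_max Ch Lam H"
    unfolding L_max_def ell_max_def lo_def hi_def by linarith
  have mean_Y: "measure_pmf.expectation M (Y t) = 0" if "t < n" for t
  proof -
    have "measure_pmf.expectation M (Y t)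
        = (\<Sum>z\<in>UNIV. Ch (xs ! t) z * (Lam (xs ! t) ((S ! t) z) - ell Ch Lam H z (S ! t)))"
      unfolding Y_def M_def using that by (intro expectation_output_seq_component) (simp add: n_def)
    also have "\<dots> = rho Ch Lam (S ! t) (xs ! t) - (\<Sum>z\<in>UNIV. Ch (xs ! t) z * ell Ch Lam H z (S ! t))"
      by (simp add: right_diff_distrib sum_subtractf rho_def mult.commute)
    finally show ?thesis
      using sum_Ch_mult_ell[OF right_inv, of "xs ! t" Lam "S ! t"] by simp
  qed
  interpret Hoeffding_ineq "measure_pmf M" "{..<n}" Y "\<lambda>_. - hi" "\<lambda>_. Lambda_max Lam - lo" 0
  proof unfold_locales
    show "prob_space.indep_vars (measure_pmf M) (\<lambda>_. borel) Y {..<n}"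
      unfolding M_def output_seq_pmf_def n_def Y_def
      by (intro prob_space.indep_vars_compose2[OF _ indep_vars_Pi_pmf])
         (auto simp: measure_pmf.prob_space_axioms)
    show "(0::real) \<equiv> \<Sum>t\<in>{..<n}. measure_pmf.expectation M (Y t)"
      using mean_Y by simp
  qed (use Y_range in auto)
  have loss_diff: "loss_S Lam S xs (map f [0..<n]) - est_loss_S Ch Lam H S (map f [0..<n])
      = (\<Sum>t<n. Y t f) / real n" for f
    by (simp add: loss_S_def est_loss_S_def n_def Y_def sum_subtractf diff_divide_distrib)
  have event: "{f. c \<le> \<bar>loss_S Lam S xs (map f [0..<n]) - est_loss_S Ch Lam H S (map f [0..<n])\<bar>}
      = {f \<in> space (measure_pmf M). real n * c \<le> \<bar>(\<Sum>t\<in>{..<n}. Y t f) - 0\<bar>}"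
    using n_pos by (auto simp: loss_diff abs_divide pos_le_divide_eq mult.commute)
  have "measure_pmf.prob M {f \<in> space (measure_pmf M). real n * c \<le> \<bar>(\<Sum>t\<in>{..<n}. Y t f) - 0\<bar>}
      \<le> 2 * exp (-2 * (real n * c)\<^sup>2 / (\<Sum>t\<in>{..<n}. (L_max Ch Lam H)\<^sup>2))"
    using Hoeffding_ineq_abs_ge[of "real n * c"] n_pos c L_pos unfolding range_width by simp
  also have "-2 * (real n * c)\<^sup>2 / (\<Sum>t\<in>{..<n}. (L_max Ch Lam H)\<^sup>2)
      = - 2 * real n * c\<^sup>2 / (L_max Ch Lam H)\<^sup>2"
    using n_pos by (simp add: power2_eq_square)
  finally have "measure_pmf.prob M
      {f. c \<le> \<bar>loss_S Lam S xs (map f [0..<n]) - est_loss_S Ch Lam H S (map f [0..<n])\<bar>}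
    \<le> 2 * exp (- 2 * real n * c\<^sup>2 / (L_max Ch Lam H)\<^sup>2)"
    unfolding event .
  thus ?thesis
    unfolding M_def n_def .
qed

lemma excess_loss_prob_le:
  fixes Lam :: "'x \<Rightarrow> 'xh::finite \<Rightarrow> real" and H :: "'z \<Rightarrow> 'x \<Rightarrow> real"
    and Shat :: "'z list \<Rightarrow> ('z \<Rightarrow> 'xh) list"
  assumes right_inv: "\<And>x x'. (\<Sum>z\<in>UNIV. Ch x z * H z x') = (if x = x' then 1 else 0)"
    and loss_nonneg: "\<And>x xh. Lam x xh \<ge> 0"
    and len: "length xs = n" and n_pos: "n > 0"
    and Shat_in: "\<And>zs. length zs = n \<Longrightarrow> Shat zs \<in> S0m n m"
    and Shat_min: "\<And>zs S. length zs = n \<Longrightarrow> S \<in> S0m n m \<Longrightarrow>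
                      est_loss_S Ch Lam H (Shat zs) zs \<le> est_loss_S Ch Lam H S zs"
    and eps: "eps \<ge> 0"
  shows "chan_prob Ch xs (\<lambda>zs. loss_S Lam (Shat zs) xs zs - D0m Lam m xs zs > eps)
    \<le> real (card (S0m n m :: ('z \<Rightarrow> 'xh) list set))
        * (2 * exp (- real n * (eps\<^sup>2 / (2 * (L_max Ch Lam H)\<^sup>2))))"
    (is "chan_prob Ch xs ?excess \<le> real (card ?S) * ?bound")
proof (cases "L_max Ch Lam H = 0")
  case True
  \<comment> \<open>Then the exponent is a division by zero, i.e. 0, and the bound is trivial.\<close>
  have "chan_prob Ch xs ?excess \<le> 1"
    by (rule chan_prob_le_1)
  also have "1 \<le> real (card ?S)"
    using card_S0m_pos[where 'a='z and 'b='xh, of n m] by (simp add: Suc_le_eq)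
  also have "\<dots> \<le> real (card ?S) * ?bound"
    using True by simp
  finally show ?thesis .
next
  case False
  hence L_pos: "L_max Ch Lam H > 0"
    using L_max_nonneg[where Lam = Lam and Ch = Ch and H = H, OF loss_nonneg] by simp
  define dev where "dev S = {f. eps / 2 \<le>
      \<bar>loss_S Lam S xs (map f [0..<n]) - est_loss_S Ch Lam H S (map f [0..<n])\<bar>}" for S
  have excess_subset: "{f. ?excess (map f [0..<n])} \<subseteq> (\<Union>S\<in>?S. dev S)"
  proof
    fix f assume "f \<in> {f. ?excess (map f [0..<n])}"
    define zs where "zs = map f [0..<n]"
    have zs_len: "length zs = n" by (simp add: zs_def)
    obtain S where S: "S \<in> ?S" "D0m Lam m xs zs = loss_S Lam S xs zs"
      using D0m_attained[where Lam = Lam and m = m and xs = xs and zs = zs] len by blast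
    have "loss_S Lam (Shat zs) xs zs - loss_S Lam S xs zs > eps"
      using \<open>f \<in> _\<close> S(2) by (simp add: zs_def)
    moreover have "est_loss_S Ch Lam H (Shat zs) zs \<le> est_loss_S Ch Lam H S zs"
      using Shat_min[OF zs_len S(1)] .
    ultimately have "eps / 2 \<le> \<bar>loss_S Lam (Shat zs) xs zs - est_loss_S Ch Lam H (Shat zs) zs\<bar>
        \<or> eps / 2 \<le> \<bar>loss_S Lam S xs zs - est_loss_S Ch Lam H S zs\<bar>"
      by linarith
    hence "f \<in> dev (Shat zs) \<or> f \<in> dev S"
      by (simp add: dev_def zs_def)
    thus "f \<in> (\<Union>S\<in>?S. dev S)"
      using S(1) Shat_in[OF zs_len] by blast
  qed
  have dev_prob: "measure_pmf.prob (output_seq_pmf xs) (dev S) \<le> ?bound" if "S \<in> ?S" for S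
  proof -
    have "length S = length xs" "xs \<noteq> []"
      using that len n_pos by (auto simp: S0m_def)
    from loss_estimate_deviation_prob_le[OF right_inv loss_nonneg this L_pos, of "eps / 2"]
    have "measure_pmf.prob (output_seq_pmf xs) (dev S)
        \<le> 2 * exp (- 2 * real n * (eps / 2)\<^sup>2 / (L_max Ch Lam H)\<^sup>2)"
      using eps len by (simp add: dev_def)
    also have "- 2 * real n * (eps / 2)\<^sup>2 / (L_max Ch Lam H)\<^sup>2
        = - real n * (eps\<^sup>2 / (2 * (L_max Ch Lam H)\<^sup>2))"
      by (simp add: power_divide)
    finally show ?thesis .
  qed
  have "chan_prob Ch xs ?excess = measure_pmf.prob (output_seq_pmf xs) {f. ?excess (map f [0..<n])}"
    using len by (simp add: chan_prob_eq_prob_output_seq)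
  also have "\<dots> \<le> measure_pmf.prob (output_seq_pmf xs) (\<Union>S\<in>?S. dev S)"
    using excess_subset by (rule measure_pmf.finite_measure_mono) simp
  also have "\<dots> \<le> (\<Sum>S\<in>?S. measure_pmf.prob (output_seq_pmf xs) (dev S))"
    using finite_S0m by (intro measure_pmf.finite_measure_subadditive_finite) auto
  also have "\<dots> \<le> (\<Sum>S\<in>?S. ?bound)"
    using dev_prob by (rule sum_mono)
  also have "\<dots> = real (card ?S) * ?bound"
    by simp
  finally show ?thesis .
qed

end

lemma exp_entropy_bound_eq:
  fixes a h N :: real and n m :: nat
  assumes n: "n > 0" and N: "N > 0"
  shows "(N ^ (m + 1) * exp (real n * h))\<^sup>2 * (2 * exp (- real n * a))
       = 2 * exp (- real n * (a - 2 * (h + (real m + 1) * ln N / real n)))"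
proof -
  have "- real n * (a - 2 * (h + (real m + 1) * ln N / real n))
      = - real n * a + 2 * (real n * h) + real ((m + 1) * 2) * ln N"
    using n by (simp add: field_simps)
  hence "exp (- real n * (a - 2 * (h + (real m + 1) * ln N / real n)))
      = exp (- real n * a) * exp (real n * h) ^ 2 * N ^ ((m + 1) * 2)"
    using N by (simp only: exp_add exp_double exp_of_nat_mult exp_ln)
  moreover have "(N ^ (m + 1) * exp (real n * h))\<^sup>2 = N ^ ((m + 1) * 2) * exp (real n * h) ^ 2"
    by (simp only: power_mult_distrib power_mult)
  ultimately show ?thesis
    by (simp only: mult_ac)
qed

theorem theorem2:
  fixes Ch :: "'x::finite \<Rightarrow> 'z::finite \<Rightarrow> real"
    and Lam :: "'x \<Rightarrow> 'xh::finite \<Rightarrow> real"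
    and H :: "'z \<Rightarrow> 'x \<Rightarrow> real"
    and Shat :: "'z list \<Rightarrow> ('z \<Rightarrow> 'xh) list"
    and n m :: nat and eps :: real and xs :: "'x list"
  assumes stoch_nonneg: "\<And>x z. Ch x z \<ge> 0"
    and stoch_sum: "\<And>x. (\<Sum>z\<in>UNIV. Ch x z) = 1"
    and full_rank: "rank ((\<chi> x z. Ch x z) :: real^'z^'x) = CARD('x)"
    and right_inv: "\<And>x x'. (\<Sum>z\<in>UNIV. Ch x z * H z x') = (if x = x' then 1 else 0)"
    and loss_nonneg: "\<And>x xh. Lam x xh \<ge> 0"
    and n_ge: "n \<ge> 2"
    and m_le: "m \<le> n div 2"
    and Shat_in: "\<And>zs. length zs = n \<Longrightarrow> Shat zs \<in> S0m n m"
    and Shat_min: "\<And>zs S. length zs = n \<Longrightarrow> S \<in> S0m n m \<Longrightarrow>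
                      est_loss_S Ch Lam H (Shat zs) zs \<le> est_loss_S Ch Lam H S zs"
    and eps_pos: "eps > 0"
    and xs_len: "length xs = n"
  shows "chan_prob Ch xs (\<lambda>zs. loss_S Lam (Shat zs) xs zs - D0m Lam m xs zs > eps)
    \<le> 2 * exp (- real n * (eps\<^sup>2 / (2 * (L_max Ch Lam H)\<^sup>2)
          - 2 * (hb (real m / real n) + (real m + 1) * ln (real CARD('z \<Rightarrow> 'xh)) / real n)))"
proof -
  interpret memoryless_channel Ch
    using stoch_nonneg stoch_sum by unfold_locales
  define K where "K = real CARD('z \<Rightarrow> 'xh) ^ (m + 1) * exp (real n * hb (real m / real n))"
  have card_le_K: "real (card (S0m n m :: ('z \<Rightarrow> 'xh) list set)) \<le> K"
    unfolding K_def using n_ge m_le by (intro card_S0m_le_exp_entropy) auto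
  hence "1 \<le> K"
    using card_S0m_pos[where 'a='z and 'b='xh, of n m] by (simp add: Suc_le_eq)
  hence "K \<le> K\<^sup>2"
    by (simp add: power2_eq_square)
  have "chan_prob Ch xs (\<lambda>zs. loss_S Lam (Shat zs) xs zs - D0m Lam m xs zs > eps)
      \<le> real (card (S0m n m :: ('z \<Rightarrow> 'xh) list set))
        * (2 * exp (- real n * (eps\<^sup>2 / (2 * (L_max Ch Lam H)\<^sup>2))))"
    using right_inv loss_nonneg xs_len n_ge Shat_in Shat_min eps_pos
    by (intro excess_loss_prob_le) auto
  \<comment> \<open>The stated bound is weaker than the union bound by the factor K, which is at least 1.\<close>
  also have "\<dots> \<le> K\<^sup>2 * (2 * exp (- real n * (eps\<^sup>2 / (2 * (L_max Ch Lam H)\<^sup>2))))"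
    using card_le_K \<open>K \<le> K\<^sup>2\<close> by (intro mult_right_mono) auto
  also have "\<dots> = 2 * exp (- real n * (eps\<^sup>2 / (2 * (L_max Ch Lam H)\<^sup>2)
          - 2 * (hb (real m / real n) + (real m + 1) * ln (real CARD('z \<Rightarrow> 'xh)) / real n)))"
    unfolding K_def using n_ge by (intro exp_entropy_bound_eq) auto
  finally show ?thesis .
qed

end
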